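(* Let $\mathcal T$ be an orbital category. The monotone map $\mathfrak R:\mathrm{wIndSys}^{uni}_{\mathcal T}\to\mathrm{Transf}_{\mathcal T}$ has a fully faithful right adjoint, given by the composite of the inverse of the bijection $\mathfrak R|:\mathrm{IndSys}_{\mathcal T}\xrightarrow{\sim}\mathrm{Transf}_{\mathcal T}$ with the inclusion $\mathrm{IndSys}_{\mathcal T}\hookrightarrow\mathrm{wIndSys}^{uni}_{\mathcal T}$, and a fully faithful left adjoint given by $R\mapsto\overline{\underline{\mathbb F}}_R$.
   Context: For a small category $\mathcal T$, $\mathbb F_{\mathcal T}$ is the full subcategory of $\mathrm{Fun}(\mathcal T^{op},\mathrm{Set})$ on finite coproducts of representables; $\mathcal T$ is orbital if $\mathbb F_{\mathcal T}$ has pullbacks. $\mathbb F_V:=\mathbb F_{\mathcal T,/V}$, $*_V$ terminal, $\emptyset_V$ initial, $n\cdot S$ the $n$-fold coproduct; for $U\to V$, $\mathrm{Res}^V_U$ is pullback and $\mathrm{Ind}^V_U$ postcomposition. A full $\mathcal T$-subcategory assigns isomorphism-closed classes $\mathcal C_V\subseteq\mathrm{Ob}\,\mathbb F_V$ stable under restriction. For $S\in\mathbb F_V$ with orbits $U$ and $T_U\in\mathbb F_U$, $\coprod_U^ST_U:=\coprod_U\mathrm{Ind}_U^VT_U$. A $\mathcal T$-weak indexing system is a full $\mathcal T$-subcategory with $\mathcal C_V\neq\emptyset\Rightarrow *_V\in\mathcal C_V$ and closed under $\coprod^S_UT_U$ for $S\in\mathcal C_V$, $T_U\in\mathcal C_U$.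 It is unital if every $\mathcal C_V$ is nonempty and $S\sqcup S'\in\mathcal C_V\Rightarrow S,S'\in\mathcal C_V$; an indexing system if moreover each $\mathcal C_V$ is closed under finite coproducts. $\mathrm{wIndSys}^{uni}_{\mathcal T}\supseteq\mathrm{IndSys}_{\mathcal T}$ are the posets under inclusion; the poset of weak indexing systems has arbitrary meets (intersections), so for any collection $\mathcal D$ there is a smallest weak indexing system $\mathrm{Cl}_\infty(\mathcal D)$ containing it, and joins $\vee$ exist. A transfer system is a wide subcategory $R\subseteq\mathcal T$ containing all isomorphisms such that for every commutative square $V'\to V$, $\alpha':V'\to U'$, $\alpha:V\to U$, $U'\to U$ in $\mathcal T$ with $\alpha\in R$ and the induced map $V'\to V\times_UU'$ in $\mathbb F_{\mathcal T}$ a summand inclusion, $\alpha'\in R$; $\mathrm{Transf}_{\mathcal T}$ is their poset. $\mathfrak R(\mathcal C)$ is the set of maps $U\to V$ in $\mathcal T$ such that $U$, viewed as a $V$-set, lies in $\mathcal C_V$; it is a transfer system for unital $\mathcal C$, and it is a known fact that $\mathfrak R$ restricts to a bijection $\mathrm{IndSys}_{\mathcal T}\to\mathrm{Transf}_{\mathcal T}$. $\underline{\mathbb F}^0_{\mathcal T}$ has $V$-values $\{\emptyset_V,*_V\}$, and $\overline{\underline{\mathbb F}}_R:=\underline{\mathbb F}^0_{\mathcal T}\vee\mathrm{Cl}_\infty\big(\{\mathrm{Res}^W_VU\mid (U\to W)\in R,\ (V\to W)\in\mathcal T\}\big)$, where $U$ is regarded as a $W$-set. Adjoints of monotone maps: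 $L\dashv\pi$ iff $L(x)\le y\iff x\le\pi(y)$; fully faithful means order-reflecting. *)

theory Defs
  imports Main
begin

text \<open>A small category: a set of objects, a set of arrows with domain and codomain,
composition (cComp g f = g o f) and identities.\<close>

record ('o, 'm) cat =
  cOb   :: "'o set"
  cAr   :: "'m set"
  cDom  :: "'m \<Rightarrow> 'o"
  cCod  :: "'m \<Rightarrow> 'o"
  cComp :: "'m \<Rightarrow> 'm \<Rightarrow> 'm"
  cId   :: "'o \<Rightarrow> 'm"

definition hom :: "('o,'m) cat \<Rightarrow> 'o \<Rightarrow> 'o \<Rightarrow> 'm set" where
  "hom T X Y = {f \<in> cAr T. cDom T f = X \<and> cCod T f = Y}"

definition is_category :: "('o,'m) cat \<Rightarrow> bool" where
  "is_category T \<longleftrightarrow>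
     (\<forall>f\<in>cAr T. cDom T f \<in> cOb T \<and> cCod T f \<in> cOb T) \<and>
     (\<forall>X\<in>cOb T. cId T X \<in> hom T X X) \<and>
     (\<forall>f g. f \<in> cAr T \<and> g \<in> cAr T \<and> cCod T f = cDom T g \<longrightarrow>
            cComp T g f \<in> hom T (cDom T f) (cCod T g)) \<and>
     (\<forall>f g h. f \<in> cAr T \<and> g \<in> cAr T \<and> h \<in> cAr T \<and> cCod T f = cDom T g \<and> cCod T g = cDom T h
            \<longrightarrow> cComp T h (cComp T g f) = cComp T (cComp T h g) f) \<and>
     (\<forall>f\<in>cAr T. cComp T (cId T (cCod T f)) f = f \<and> cComp T f (cId T (cDom T f)) = f)"

definition is_iso :: "('o,'m) cat \<Rightarrow> 'm \<Rightarrow> bool" where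
  "is_iso T f \<longleftrightarrow> f \<in> cAr T \<and>
     (\<exists>g\<in>hom T (cCod T f) (cDom T f). cComp T g f = cId T (cDom T f) \<and> cComp T f g = cId T (cCod T f))"

text \<open>An object of F_T (a finite coproduct of representables) is a finite list of objects of T.
By the Yoneda lemma (coproducts of presheaves being pointwise), a morphism from the coproduct
of the representables As!i to that of Bs!j is a choice, for every i, of an index phi i and an arrow
As!i \<rightarrow> Bs!(phi i) in T.  Morphisms are represented as pairs (phi, fs), compared extensionally
on the indices of the source.\<close>

type_synonym 'm fmor = "(nat \<Rightarrow> nat) \<times> (nat \<Rightarrow> 'm)"

definition Fobj :: "('o,'m) cat \<Rightarrow> 'o list \<Rightarrow> bool" where
  "Fobj T As \<longleftrightarrow> set As \<subseteq> cOb T"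

definition fhom :: "('o,'m) cat \<Rightarrow> 'o list \<Rightarrow> 'o list \<Rightarrow> 'm fmor set" where
  "fhom T As Bs = {m. \<forall>i<length As. fst m i < length Bs \<and> snd m i \<in> hom T (As!i) (Bs!(fst m i))}"

definition feq :: "'o list \<Rightarrow> 'm fmor \<Rightarrow> 'm fmor \<Rightarrow> bool" where
  "feq As m m' \<longleftrightarrow> (\<forall>i<length As. fst m i = fst m' i \<and> snd m i = snd m' i)"

definition fcomp :: "('o,'m) cat \<Rightarrow> 'm fmor \<Rightarrow> 'm fmor \<Rightarrow> 'm fmor" where
  "fcomp T n m = (fst n \<circ> fst m, \<lambda>i. cComp T (snd n (fst m i)) (snd m i))"

definition fid :: "('o,'m) cat \<Rightarrow> 'o list \<Rightarrow> 'm fmor" where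
  "fid T As = (\<lambda>i. i, \<lambda>i. cId T (As!i))"

definition is_fpullback :: "('o,'m) cat \<Rightarrow> 'o list \<Rightarrow> 'o list \<Rightarrow> 'o list \<Rightarrow> 'm fmor \<Rightarrow> 'm fmor
    \<Rightarrow> 'o list \<Rightarrow> 'm fmor \<Rightarrow> 'm fmor \<Rightarrow> bool" where
  "is_fpullback T A B C f g P p q \<longleftrightarrow>
     Fobj T P \<and> p \<in> fhom T P A \<and> q \<in> fhom T P B \<and> feq P (fcomp T f p) (fcomp T g q) \<and>
     (\<forall>Q p' q'. Fobj T Q \<and> p' \<in> fhom T Q A \<and> q' \<in> fhom T Q B \<and> feq Q (fcomp T f p') (fcomp T g q')
        \<longrightarrow> (\<exists>h\<in>fhom T Q P. feq Q (fcomp T p h) p' \<and> feq Q (fcomp T q h) q' \<and>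
              (\<forall>h'\<in>fhom T Q P. feq Q (fcomp T p h') p' \<and> feq Q (fcomp T q h') q' \<longrightarrow> feq Q h h')))"

definition orbital :: "('o,'m) cat \<Rightarrow> bool" where
  "orbital T \<longleftrightarrow> is_category T \<and>
     (\<forall>A B C f g. Fobj T A \<and> Fobj T B \<and> Fobj T C \<and> f \<in> fhom T A C \<and> g \<in> fhom T B C
        \<longrightarrow> (\<exists>P p q. is_fpullback T A B C f g P p q))"

text \<open>A summand inclusion A \<rightarrow> B in F_T (i.e. isomorphic to the inclusion of a summand):
injective on orbits and an isomorphism on each orbit.\<close>

definition summand_incl :: "('o,'m) cat \<Rightarrow> 'o list \<Rightarrow> 'o list \<Rightarrow> 'm fmor \<Rightarrow> bool" where
  "summand_incl T A B m \<longleftrightarrow> m \<in> fhom T A B \<and> inj_on (fst m) {..<length A} \<and>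
     (\<forall>i<length A. is_iso T (snd m i))"

text \<open>An object of F_V is a finite coproduct of representables with a map to V, i.e. a list
of arrows of T with codomain V.\<close>

definition sobj :: "('o,'m) cat \<Rightarrow> 'o \<Rightarrow> 'm list \<Rightarrow> bool" where
  "sobj T V S \<longleftrightarrow> V \<in> cOb T \<and> (\<forall>a\<in>set S. a \<in> cAr T \<and> cCod T a = V)"

definition doms :: "('o,'m) cat \<Rightarrow> 'm list \<Rightarrow> 'o list" where
  "doms T S = map (cDom T) S"

definition shom :: "('o,'m) cat \<Rightarrow> 'm list \<Rightarrow> 'm list \<Rightarrow> 'm fmor set" where
  "shom T S S' = {m \<in> fhom T (doms T S) (doms T S').
      \<forall>i<length S. cComp T (S'!(fst m i)) (snd m i) = S!i}"

definition s_iso :: "('o,'m) cat \<Rightarrow> 'o \<Rightarrow> 'm list \<Rightarrow> 'm list \<Rightarrow> bool" where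
  "s_iso T V S S' \<longleftrightarrow> sobj T V S \<and> sobj T V S' \<and>
     (\<exists>m\<in>shom T S S'. \<exists>n\<in>shom T S' S.
        feq (doms T S) (fcomp T n m) (fid T (doms T S)) \<and>
        feq (doms T S') (fcomp T m n) (fid T (doms T S')))"

text \<open>P is (a choice of) Res along a : U \<rightarrow> V of S in F_V: a pullback in F_T of S \<rightarrow> V \<leftarrow> U,
regarded as an object over U.\<close>

definition is_res :: "('o,'m) cat \<Rightarrow> 'm \<Rightarrow> 'm list \<Rightarrow> 'm list \<Rightarrow> bool" where
  "is_res T a S P \<longleftrightarrow> a \<in> cAr T \<and> sobj T (cCod T a) S \<and> sobj T (cDom T a) P \<and>
     (\<exists>q. is_fpullback T (doms T S) [cDom T a] [cCod T a] (\<lambda>i. 0, \<lambda>i. S!i) (\<lambda>i. 0, \<lambda>i. a)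
            (doms T P) q (\<lambda>i. 0, \<lambda>i. P!i))"

type_synonym ('o,'m) tsub = "'o \<Rightarrow> 'm list set"

definition full_Tsub :: "('o,'m) cat \<Rightarrow> ('o,'m) tsub \<Rightarrow> bool" where
  "full_Tsub T C \<longleftrightarrow>
     (\<forall>V S. S \<in> C V \<longrightarrow> sobj T V S) \<and>
     (\<forall>V S S'. S \<in> C V \<and> s_iso T V S S' \<longrightarrow> S' \<in> C V) \<and>
     (\<forall>a S P. a \<in> cAr T \<and> S \<in> C (cCod T a) \<and> is_res T a S P \<longrightarrow> P \<in> C (cDom T a))"

text \<open>The coproduct of Ind_{U_i}^V T_i over the orbits U_i of S.\<close>

definition tcoprod :: "('o,'m) cat \<Rightarrow> 'm list \<Rightarrow> 'm list list \<Rightarrow> 'm list" where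
  "tcoprod T S Ts = concat (map (\<lambda>i. map (cComp T (S!i)) (Ts!i)) [0..<length S])"

definition wIndSys :: "('o,'m) cat \<Rightarrow> ('o,'m) tsub \<Rightarrow> bool" where
  "wIndSys T C \<longleftrightarrow> full_Tsub T C \<and>
     (\<forall>V. C V \<noteq> {} \<longrightarrow> [cId T V] \<in> C V) \<and>
     (\<forall>V S Ts. S \<in> C V \<and> length Ts = length S \<and> (\<forall>i<length S. Ts!i \<in> C (cDom T (S!i)))
        \<longrightarrow> tcoprod T S Ts \<in> C V)"

definition unital :: "('o,'m) cat \<Rightarrow> ('o,'m) tsub \<Rightarrow> bool" where
  "unital T C \<longleftrightarrow> wIndSys T C \<and> (\<forall>V\<in>cOb T. C V \<noteq> {}) \<and>
     (\<forall>V S S'. S @ S' \<in> C V \<longrightarrow> S \<in> C V \<and> S' \<in> C V)"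

definition IndSys :: "('o,'m) cat \<Rightarrow> ('o,'m) tsub \<Rightarrow> bool" where
  "IndSys T C \<longleftrightarrow> unital T C \<and> (\<forall>V\<in>cOb T. [] \<in> C V) \<and>
     (\<forall>V S S'. S \<in> C V \<and> S' \<in> C V \<longrightarrow> S @ S' \<in> C V)"

definition transf :: "('o,'m) cat \<Rightarrow> 'm set \<Rightarrow> bool" where
  "transf T R \<longleftrightarrow> R \<subseteq> cAr T \<and> (\<forall>f. is_iso T f \<longrightarrow> f \<in> R) \<and>
     (\<forall>f g. f \<in> R \<and> g \<in> R \<and> cCod T f = cDom T g \<longrightarrow> cComp T g f \<in> R) \<and>
     (\<forall>v a' a u. v \<in> cAr T \<and> a' \<in> cAr T \<and> a \<in> R \<and> u \<in> cAr T \<and>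
        cDom T v = cDom T a' \<and> cCod T v = cDom T a \<and> cCod T a' = cDom T u \<and> cCod T a = cCod T u \<and>
        cComp T a v = cComp T u a' \<longrightarrow>
        (\<forall>P p q m. is_fpullback T [cDom T a] [cDom T u] [cCod T a] (\<lambda>i. 0, \<lambda>i. a) (\<lambda>i. 0, \<lambda>i. u) P p q \<and>
           m \<in> fhom T [cDom T v] P \<and>
           feq [cDom T v] (fcomp T p m) (\<lambda>i. 0, \<lambda>i. v) \<and>
           feq [cDom T v] (fcomp T q m) (\<lambda>i. 0, \<lambda>i. a') \<and>
           summand_incl T [cDom T v] P m \<longrightarrow> a' \<in> R))"

definition frakR :: "('o,'m) cat \<Rightarrow> ('o,'m) tsub \<Rightarrow> 'm set" where
  "frakR T C = {f \<in> cAr T. [f] \<in> C (cCod T f)}"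

definition Cl :: "('o,'m) cat \<Rightarrow> ('o,'m) tsub \<Rightarrow> ('o,'m) tsub" where
  "Cl T D = Inf {C. wIndSys T C \<and> D \<le> C}"

definition wjoin :: "('o,'m) cat \<Rightarrow> ('o,'m) tsub \<Rightarrow> ('o,'m) tsub \<Rightarrow> ('o,'m) tsub" where
  "wjoin T A B = Cl T (sup A B)"

definition F0 :: "('o,'m) cat \<Rightarrow> ('o,'m) tsub" where
  "F0 T V = {S. s_iso T V [] S \<or> s_iso T V [cId T V] S}"

definition Fbar :: "('o,'m) cat \<Rightarrow> 'm set \<Rightarrow> ('o,'m) tsub" where
  "Fbar T R = wjoin T (F0 T)
     (Cl T (\<lambda>V. {P. \<exists>f g. f \<in> R \<and> g \<in> cAr T \<and> cCod T g = cCod T f \<and> cDom T g = V \<and> is_res T g [f] P}))"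

end

theory Submission
  imports Defs
begin

(* The right adjoint sends a transfer system R to the indexing system of all V-sets whose orbits
   lie in R.  It is closed under restriction because every orbit of a restriction Res_a S is
   isomorphic to an orbit of the restriction of a single orbit of S, to which the pullback axiom
   of R applies; and since a unital C can split off single orbits, C lies in it iff frakR C <= R.
   The left adjoint Fbar R is generated by the empty set, the point and the restrictions of the
   arrows of R, and a weak indexing system contains these restrictions iff its transfers contain R.
   Both adjoints are sections of frakR, hence fully faithful. *)

locale category =
  fixes T :: "('o, 'm) cat"
  assumes is_category: "is_category T"
begin

lemma dom_in_Ob: "f \<in> cAr T \<Longrightarrow> cDom T f \<in> cOb T"
  and cod_in_Ob: "f \<in> cAr T \<Longrightarrow> cCod T f \<in> cOb T"
  and id_in_hom: "X \<in> cOb T \<Longrightarrow> cId T X \<in> hom T X X"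
  using is_category unfolding is_category_def by blast+

lemma cComp_in_hom: "f \<in> hom T X Y \<Longrightarrow> g \<in> hom T Y Z \<Longrightarrow> cComp T g f \<in> hom T X Z"
  and cComp_assoc: "f \<in> hom T X Y \<Longrightarrow> g \<in> hom T Y Z \<Longrightarrow> h \<in> hom T Z W \<Longrightarrow>
    cComp T h (cComp T g f) = cComp T (cComp T h g) f"
  and cComp_id_left: "f \<in> hom T X Y \<Longrightarrow> cComp T (cId T Y) f = f"
  and cComp_id_right: "f \<in> hom T X Y \<Longrightarrow> cComp T f (cId T X) = f"
  using is_category unfolding is_category_def hom_def by auto

lemma ar_in_hom: "f \<in> cAr T \<Longrightarrow> f \<in> hom T (cDom T f) (cCod T f)"
  unfolding hom_def by simp

lemma id_is_iso: "X \<in> cOb T \<Longrightarrow> is_iso T (cId T X)"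
  unfolding is_iso_def using id_in_hom cComp_id_left by (fastforce simp: hom_def)

end

lemma orbital_category: "orbital T \<Longrightarrow> category T"
  unfolding orbital_def category_def by blast

section \<open>Pullbacks of finite coproducts of orbits\<close>

lemma fhom_single: "m \<in> fhom T [X] B \<longleftrightarrow> fst m 0 < length B \<and> snd m 0 \<in> hom T X (B ! fst m 0)"
  unfolding fhom_def by auto

lemma feq_single: "feq [X] m m' \<longleftrightarrow> fst m 0 = fst m' 0 \<and> snd m 0 = snd m' 0"
  unfolding feq_def by auto

lemma feq_trans: "feq A m m' \<Longrightarrow> feq A m' m'' \<Longrightarrow> feq A m m''"
  unfolding feq_def by auto

lemma feq_fcomp_left: "feq B n n' \<Longrightarrow> m \<in> fhom T A B \<Longrightarrow> feq A (fcomp T n m) (fcomp T n' m)"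
  unfolding feq_def fcomp_def fhom_def by auto

lemma feq_fcomp_right: "feq A m m' \<Longrightarrow> feq A (fcomp T n m) (fcomp T n m')"
  unfolding feq_def fcomp_def by auto

lemma fhom_feq: "m \<in> fhom T A B \<Longrightarrow> feq A m m' \<Longrightarrow> m' \<in> fhom T A B"
  unfolding feq_def fhom_def by auto

lemma length_doms [simp]: "length (doms T S) = length S"
  and nth_doms [simp]: "i < length S \<Longrightarrow> doms T S ! i = cDom T (S ! i)"
  unfolding doms_def by simp_all

lemma fpullbackD:
  "is_fpullback T A B C f g P p q \<Longrightarrow>
    Fobj T P \<and> p \<in> fhom T P A \<and> q \<in> fhom T P B \<and> feq P (fcomp T f p) (fcomp T g q)"
  unfolding is_fpullback_def by blast

lemma fpullback_square_at:
  assumes "is_fpullback T A B C f g P p q" and "j < length P"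
  shows "fst p j < length A" "snd p j \<in> hom T (P ! j) (A ! fst p j)"
    and "fst q j < length B" "snd q j \<in> hom T (P ! j) (B ! fst q j)"
    and "fst f (fst p j) = fst g (fst q j)"
    and "cComp T (snd f (fst p j)) (snd p j) = cComp T (snd g (fst q j)) (snd q j)"
  using fpullbackD[OF assms(1)] assms(2) unfolding fhom_def feq_def fcomp_def by auto

lemma fpullback_lift:
  "is_fpullback T A B C f g P p q \<Longrightarrow> Fobj T Q \<Longrightarrow> p' \<in> fhom T Q A \<Longrightarrow> q' \<in> fhom T Q B \<Longrightarrow>
    feq Q (fcomp T f p') (fcomp T g q') \<Longrightarrow>
    \<exists>h\<in>fhom T Q P. feq Q (fcomp T p h) p' \<and> feq Q (fcomp T q h) q'"
  unfolding is_fpullback_def by blast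

lemma fpullback_unique:
  assumes "is_fpullback T A B C f g P p q"
    and "Fobj T Q" "p' \<in> fhom T Q A" "q' \<in> fhom T Q B" "feq Q (fcomp T f p') (fcomp T g q')"
    and "h \<in> fhom T Q P" "feq Q (fcomp T p h) p'" "feq Q (fcomp T q h) q'"
    and "h' \<in> fhom T Q P" "feq Q (fcomp T p h') p'" "feq Q (fcomp T q h') q'"
  shows "feq Q h h'"
proof -
  obtain h0 where "\<forall>k\<in>fhom T Q P. feq Q (fcomp T p k) p' \<and> feq Q (fcomp T q k) q' \<longrightarrow> feq Q h0 k"
    using assms(1-5) unfolding is_fpullback_def by blast
  then have "feq Q h0 h" "feq Q h0 h'"
    using assms(6-11) by blast+
  then show ?thesis
    unfolding feq_def by simp
qed

lemma fpullback_feq: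
  assumes pb: "is_fpullback T A B C f g P p q" and f: "feq A f f'" and q: "feq P q q'"
  shows "is_fpullback T A B C f' g P p q'"
proof -
  have f_iff: "feq Q (fcomp T f' x) y \<longleftrightarrow> feq Q (fcomp T f x) y" if "x \<in> fhom T Q A" for Q x y
    using feq_fcomp_left[OF f that] unfolding feq_def by auto
  have q_iff: "feq Q (fcomp T q' h) y \<longleftrightarrow> feq Q (fcomp T q h) y" if "h \<in> fhom T Q P" for Q h y
    using feq_fcomp_left[OF q that] unfolding feq_def by auto
  have pbD: "Fobj T P" "p \<in> fhom T P A" "q \<in> fhom T P B" "feq P (fcomp T f p) (fcomp T g q)"
    using fpullbackD[OF pb] by blast+
  show ?thesis
    unfolding is_fpullback_def
  proof (intro conjI allI impI)
    show "q' \<in> fhom T P B"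
      using fhom_feq[OF pbD(3) q] .
    show "feq P (fcomp T f' p) (fcomp T g q')"
      using f_iff[OF pbD(2)] pbD(4) feq_fcomp_right[OF q] feq_trans by blast
    fix Q p' q'' assume "Fobj T Q \<and> p' \<in> fhom T Q A \<and> q'' \<in> fhom T Q B \<and> feq Q (fcomp T f' p') (fcomp T g q'')"
    then have "Fobj T Q \<and> p' \<in> fhom T Q A \<and> q'' \<in> fhom T Q B \<and> feq Q (fcomp T f p') (fcomp T g q'')"
      using f_iff by blast
    then have "\<exists>h\<in>fhom T Q P. feq Q (fcomp T p h) p' \<and> feq Q (fcomp T q h) q'' \<and>
        (\<forall>h'\<in>fhom T Q P. feq Q (fcomp T p h') p' \<and> feq Q (fcomp T q h') q'' \<longrightarrow> feq Q h h')"
      using pb unfolding is_fpullback_def by blast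
    then show "\<exists>h\<in>fhom T Q P. feq Q (fcomp T p h) p' \<and> feq Q (fcomp T q' h) q'' \<and>
        (\<forall>h'\<in>fhom T Q P. feq Q (fcomp T p h') p' \<and> feq Q (fcomp T q' h') q'' \<longrightarrow> feq Q h h')"
      using q_iff by (metis (no_types, lifting))
  qed (use pbD in blast)+
qed

abbreviation orbit_pullback :: "('o, 'm) cat \<Rightarrow> 'm \<Rightarrow> 'm \<Rightarrow> 'o list \<Rightarrow> 'm fmor \<Rightarrow> 'm fmor \<Rightarrow> bool" where
  "orbit_pullback T f g P p q \<equiv>
    is_fpullback T [cDom T f] [cDom T g] [cCod T f] (\<lambda>i. 0, \<lambda>i. f) (\<lambda>i. 0, \<lambda>i. g) P p q"

abbreviation res_pullback :: "('o, 'm) cat \<Rightarrow> 'm \<Rightarrow> 'm list \<Rightarrow> 'm list \<Rightarrow> 'm fmor \<Rightarrow> bool" where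
  "res_pullback T a S P q \<equiv>
    is_fpullback T (doms T S) [cDom T a] [cCod T a] (\<lambda>i. 0, \<lambda>i. S ! i) (\<lambda>i. 0, \<lambda>i. a)
      (doms T P) q (\<lambda>i. 0, \<lambda>i. P ! i)"

lemma orbit_pullback_at:
  assumes pb: "orbit_pullback T f g P p q" and j: "j < length P"
  shows "fst p j = 0" "fst q j = 0"
    and "snd p j \<in> hom T (P ! j) (cDom T f)" "snd q j \<in> hom T (P ! j) (cDom T g)"
    and "cComp T f (snd p j) = cComp T g (snd q j)"
proof -
  note sq = fpullback_square_at[OF pb j]
  show "fst p j = 0" "fst q j = 0"
    using sq(1,3) by simp_all
  then show "snd p j \<in> hom T (P ! j) (cDom T f)" "snd q j \<in> hom T (P ! j) (cDom T g)"
    and "cComp T f (snd p j) = cComp T g (snd q j)"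
    using sq(2,4,6) by simp_all
qed

lemma res_pullback_at:
  assumes pb: "res_pullback T a S P q" and k: "k < length P"
  shows "fst q k < length S" "snd q k \<in> hom T (cDom T (P ! k)) (cDom T (S ! fst q k))"
    and "P ! k \<in> hom T (cDom T (P ! k)) (cDom T a)"
    and "cComp T (S ! fst q k) (snd q k) = cComp T a (P ! k)"
proof -
  have "k < length (doms T P)"
    using k by simp
  note sq = fpullback_square_at[OF pb this, unfolded length_doms nth_doms[OF k]]
  show i: "fst q k < length S"
    using sq(1) .
  show "snd q k \<in> hom T (cDom T (P ! k)) (cDom T (S ! fst q k))"
    and "P ! k \<in> hom T (cDom T (P ! k)) (cDom T a)"
    and "cComp T (S ! fst q k) (snd q k) = cComp T a (P ! k)"
    using sq(2-6) nth_doms[OF i, of T] by simp_all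
qed

context category
begin

lemma fpullback_lift_point:
  assumes pb: "is_fpullback T A B C f g P p q" and X: "X \<in> cOb T"
    and a: "ia < length A" "a \<in> hom T X (A ! ia)" and b: "ib < length B" "b \<in> hom T X (B ! ib)"
    and comm: "fst f ia = fst g ib" "cComp T (snd f ia) a = cComp T (snd g ib) b"
  obtains j x where "j < length P" "x \<in> hom T X (P ! j)"
    "fst p j = ia" "cComp T (snd p j) x = a" "fst q j = ib" "cComp T (snd q j) x = b"
proof -
  have "\<exists>h\<in>fhom T [X] P. feq [X] (fcomp T p h) (\<lambda>_. ia, \<lambda>_. a) \<and> feq [X] (fcomp T q h) (\<lambda>_. ib, \<lambda>_. b)"
    by (rule fpullback_lift[OF pb]) (use X a b comm in \<open>auto simp: Fobj_def fhom_single feq_single fcomp_def\<close>)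
  then obtain h where "h \<in> fhom T [X] P"
    "feq [X] (fcomp T p h) (\<lambda>_. ia, \<lambda>_. a)" "feq [X] (fcomp T q h) (\<lambda>_. ib, \<lambda>_. b)"
    by blast
  then show thesis
    using that[of "fst h 0" "snd h 0"] unfolding fhom_single feq_single fcomp_def by simp
qed

lemma fpullback_point_eq:
  assumes pb: "is_fpullback T A B C f g P p q"
    and f: "f \<in> fhom T A C" and g: "g \<in> fhom T B C" and X: "X \<in> cOb T"
    and x: "j < length P" "x \<in> hom T X (P ! j)" and y: "j' < length P" "y \<in> hom T X (P ! j')"
    and p: "fst p j = fst p j'" "cComp T (snd p j) x = cComp T (snd p j') y"
    and q: "fst q j = fst q j'" "cComp T (snd q j) x = cComp T (snd q j') y"
  shows "j = j' \<and> x = y"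
proof -
  note sq = fpullback_square_at[OF pb x(1)]
  have fp: "snd f (fst p j) \<in> hom T (A ! fst p j) (C ! fst f (fst p j))"
    using f sq(1) unfolding fhom_def by blast
  have gq: "snd g (fst q j) \<in> hom T (B ! fst q j) (C ! fst g (fst q j))"
    using g sq(3) unfolding fhom_def by blast
  let ?p' = "(\<lambda>_::nat. fst p j, \<lambda>_::nat. cComp T (snd p j) x)"
  let ?q' = "(\<lambda>_::nat. fst q j, \<lambda>_::nat. cComp T (snd q j) x)"
  have "cComp T (snd f (fst p j)) (cComp T (snd p j) x) = cComp T (snd g (fst q j)) (cComp T (snd q j) x)"
    using cComp_assoc[OF x(2) sq(2) fp] cComp_assoc[OF x(2) sq(4) gq] sq(6) by simp
  then have comm: "feq [X] (fcomp T f ?p') (fcomp T g ?q')"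
    using sq(5) by (simp add: feq_single fcomp_def)
  have square: "Fobj T [X]" "?p' \<in> fhom T [X] A" "?q' \<in> fhom T [X] B"
    using X sq cComp_in_hom[OF x(2)] by (simp_all add: Fobj_def fhom_single)
  have "feq [X] (\<lambda>_::nat. j, \<lambda>_::nat. x) (\<lambda>_::nat. j', \<lambda>_::nat. y)"
    by (rule fpullback_unique[OF pb square comm]) (use x y p q in \<open>simp_all add: fhom_single feq_single fcomp_def\<close>)
  then show ?thesis by (simp add: feq_single)
qed

lemma sobj_fhom: "sobj T V S \<Longrightarrow> (\<lambda>i. 0, \<lambda>i. S ! i) \<in> fhom T (doms T S) [V]"
  unfolding sobj_def fhom_def hom_def by auto

lemma res_pullback_lift:
  assumes pb: "res_pullback T a S P q" and X: "X \<in> cOb T"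
    and i: "i < length S" and x: "x \<in> hom T X (cDom T (S ! i))" and y: "y \<in> hom T X (cDom T a)"
    and comm: "cComp T (S ! i) x = cComp T a y"
  obtains k e where "k < length P" "e \<in> hom T X (cDom T (P ! k))"
    "fst q k = i" "cComp T (snd q k) e = x" "cComp T (P ! k) e = y"
proof (rule fpullback_lift_point[OF pb X, of i x 0 y])
  fix k e assume "k < length (doms T P)" "e \<in> hom T X (doms T P ! k)"
    "fst q k = i" "cComp T (snd q k) e = x" "cComp T (snd (\<lambda>i. 0, (!) P) k) e = y"
  then show thesis
    using that by simp
qed (use i x y comm in simp_all)

lemma res_pullback_point_eq:
  assumes pb: "res_pullback T a S P q" and "a \<in> cAr T" and S: "sobj T (cCod T a) S"
    and X: "X \<in> cOb T"
    and "k < length P" "x \<in> hom T X (cDom T (P ! k))"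
    and "k' < length P" "y \<in> hom T X (cDom T (P ! k'))"
    and "fst q k = fst q k'" "cComp T (snd q k) x = cComp T (snd q k') y"
    and "cComp T (P ! k) x = cComp T (P ! k') y"
  shows "k = k' \<and> x = y"
  by (rule fpullback_point_eq[OF pb sobj_fhom[OF S] _ X])
    (use assms ar_in_hom in \<open>simp_all add: fhom_single\<close>)

lemma orbit_pullback_point_eq:
  assumes pb: "orbit_pullback T f g P p q" and f: "f \<in> cAr T" and g: "g \<in> cAr T" "cCod T g = cCod T f"
    and X: "X \<in> cOb T"
    and x: "j < length P" "x \<in> hom T X (P ! j)" and y: "j' < length P" "y \<in> hom T X (P ! j')"
    and "cComp T (snd p j) x = cComp T (snd p j') y" "cComp T (snd q j) x = cComp T (snd q j') y"
  shows "j = j' \<and> x = y"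
  by (rule fpullback_point_eq[OF pb _ _ X x y])
    (use assms orbit_pullback_at(1,2)[OF pb] ar_in_hom[OF f] ar_in_hom[OF g(1)] in \<open>simp_all add: fhom_single\<close>)

end

lemma tcoprod_conv_map2:
  "length Ts = length S \<Longrightarrow> tcoprod T S Ts = concat (map2 (\<lambda>s t. map (cComp T s) t) S Ts)"
  unfolding tcoprod_def by (rule arg_cong[where f = concat], rule nth_equalityI) simp_all

lemma tcoprod_single: "tcoprod T [g] [Ts] = map (cComp T g) Ts"
  by (simp add: tcoprod_conv_map2)

lemma tcoprod_append:
  "length Ts = length S \<Longrightarrow> length Ts' = length S' \<Longrightarrow>
    tcoprod T (S @ S') (Ts @ Ts') = tcoprod T S Ts @ tcoprod T S' Ts'"
  by (simp add: tcoprod_conv_map2)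

lemma tcoprod_empty: "tcoprod T S (replicate (length S) []) = []"
  by (simp add: tcoprod_conv_map2 zip_replicate2)

lemma tcoprod_set: "x \<in> set (tcoprod T S Ts) \<longleftrightarrow> (\<exists>i<length S. \<exists>t\<in>set (Ts ! i). x = cComp T (S ! i) t)"
  unfolding tcoprod_def by auto

context category
begin

lemma tcoprod_ids: "sobj T V S \<Longrightarrow> tcoprod T S (map (\<lambda>s. [cId T (cDom T s)]) S) = S"
proof -
  assume "sobj T V S"
  then have "cComp T s (cId T (cDom T s)) = s" if "s \<in> set S" for s
    using that cComp_id_right ar_in_hom unfolding sobj_def by blast
  then show ?thesis
    by (induction S) (simp_all add: tcoprod_conv_map2)
qed

lemma sobj_tcoprod:
  assumes S: "sobj T V S" and Ts: "\<forall>i<length S. sobj T (cDom T (S ! i)) (Ts ! i)"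
  shows "sobj T V (tcoprod T S Ts)"
proof -
  have "x \<in> hom T (cDom T x) V" if x: "x \<in> set (tcoprod T S Ts)" for x
  proof -
    obtain i t where i: "i < length S" "t \<in> set (Ts ! i)" "x = cComp T (S ! i) t"
      using x unfolding tcoprod_set by blast
    have "S ! i \<in> hom T (cDom T (S ! i)) V" "t \<in> hom T (cDom T t) (cDom T (S ! i))"
      using S Ts i(1,2) unfolding sobj_def hom_def by auto
    then show ?thesis
      using cComp_in_hom i(3) unfolding hom_def by blast
  qed
  then show ?thesis
    using S unfolding sobj_def hom_def by blast
qed

lemma s_iso_refl:
  assumes S: "sobj T V S"
  shows "s_iso T V S S"
proof -
  have ar: "S ! i \<in> hom T (cDom T (S ! i)) V" if "i < length S" for i
    using S that unfolding sobj_def hom_def by auto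
  have "fid T (doms T S) \<in> shom T S S"
    using ar id_in_hom dom_in_Ob cComp_id_right unfolding shom_def fhom_def fid_def doms_def hom_def
    by auto
  moreover have "feq (doms T S) (fcomp T (fid T (doms T S)) (fid T (doms T S))) (fid T (doms T S))"
    using ar cComp_id_right[OF id_in_hom] dom_in_Ob unfolding feq_def fcomp_def fid_def doms_def hom_def
    by auto
  ultimately show ?thesis
    using S unfolding s_iso_def by blast
qed

lemma s_iso_precomp_iso:
  assumes x: "x \<in> cAr T" "cCod T x = V" and e: "is_iso T e" "cCod T e = cDom T x"
  shows "s_iso T V [x] [cComp T x e]"
proof -
  obtain e' where e': "e' \<in> hom T (cDom T x) (cDom T e)"
    "cComp T e' e = cId T (cDom T e)" "cComp T e e' = cId T (cDom T x)"
    using e unfolding is_iso_def by auto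
  have eh: "e \<in> hom T (cDom T e) (cDom T x)" and xh: "x \<in> hom T (cDom T x) V"
    using e x unfolding is_iso_def hom_def by auto
  have xe: "cComp T x e \<in> hom T (cDom T e) V"
    using cComp_in_hom[OF eh xh] .
  have "cComp T (cComp T x e) e' = x"
    using cComp_assoc[OF e'(1) eh xh] e'(3) cComp_id_right[OF xh] by simp
  then have "(\<lambda>_. 0, \<lambda>_. e') \<in> shom T [x] [cComp T x e]" "(\<lambda>_. 0, \<lambda>_. e) \<in> shom T [cComp T x e] [x]"
    using e'(1) eh xe unfolding shom_def fhom_def doms_def hom_def by auto
  moreover have "sobj T V [x]" "sobj T V [cComp T x e]"
    using xh xe cod_in_Ob x unfolding sobj_def hom_def by auto
  ultimately show ?thesis
    using e'(2,3) xe unfolding s_iso_def feq_def fcomp_def fid_def doms_def hom_def by force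
qed

lemma s_iso_orbit:
  assumes iso: "s_iso T V S S'" and j: "j < length S'"
  obtains i e where "i < length S" "is_iso T e" "e \<in> hom T (cDom T (S' ! j)) (cDom T (S ! i))"
    "S' ! j = cComp T (S ! i) e"
proof -
  obtain m n where m: "m \<in> shom T S S'" and n: "n \<in> shom T S' S"
    and mn: "feq (doms T S) (fcomp T n m) (fid T (doms T S))"
    and nm: "feq (doms T S') (fcomp T m n) (fid T (doms T S'))"
    using iso unfolding s_iso_def by blast
  define i where "i = fst n j"
  have i: "i < length S" "snd n j \<in> hom T (cDom T (S' ! j)) (cDom T (S ! i))"
    and Sj: "cComp T (S ! i) (snd n j) = S' ! j"
    using n j unfolding shom_def fhom_def doms_def i_def by auto
  have mi: "snd m i \<in> hom T (cDom T (S ! i)) (cDom T (S' ! fst m i))"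
    using m i(1) unfolding shom_def fhom_def doms_def by auto
  have "fst m i = j" "cComp T (snd m i) (snd n j) = cId T (cDom T (S' ! j))"
    using nm j unfolding feq_def fcomp_def fid_def doms_def i_def by auto
  moreover have "cComp T (snd n j) (snd m i) = cId T (cDom T (S ! i))"
    using mn i(1) \<open>fst m i = j\<close> unfolding feq_def fcomp_def fid_def doms_def by auto
  ultimately have "is_iso T (snd n j)"
    using i(2) mi unfolding is_iso_def hom_def by auto
  then show thesis
    using that i Sj by metis
qed

end

section \<open>Weak indexing systems\<close>

lemma wIndSysI:
  assumes "\<And>V S. S \<in> C V \<Longrightarrow> sobj T V S"
    and "\<And>V S S'. S \<in> C V \<Longrightarrow> s_iso T V S S' \<Longrightarrow> S' \<in> C V"
    and "\<And>a S P. a \<in> cAr T \<Longrightarrow> S \<in> C (cCod T a) \<Longrightarrow> is_res T a S P \<Longrightarrow> P \<in> C (cDom T a)"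
    and "\<And>V. C V \<noteq> {} \<Longrightarrow> [cId T V] \<in> C V"
    and "\<And>V S Ts. S \<in> C V \<Longrightarrow> length Ts = length S \<Longrightarrow> \<forall>i<length S. Ts ! i \<in> C (cDom T (S ! i)) \<Longrightarrow>
      tcoprod T S Ts \<in> C V"
  shows "wIndSys T C"
  unfolding wIndSys_def full_Tsub_def using assms by blast

lemma
  assumes "wIndSys T C"
  shows wIndSys_sobj: "S \<in> C V \<Longrightarrow> sobj T V S"
    and wIndSys_iso_closed: "S \<in> C V \<Longrightarrow> s_iso T V S S' \<Longrightarrow> S' \<in> C V"
    and wIndSys_res_closed: "a \<in> cAr T \<Longrightarrow> S \<in> C (cCod T a) \<Longrightarrow> is_res T a S P \<Longrightarrow> P \<in> C (cDom T a)"
    and wIndSys_point: "S \<in> C V \<Longrightarrow> [cId T V] \<in> C V"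
    and wIndSys_tcoprod: "S \<in> C V \<Longrightarrow> length Ts = length S \<Longrightarrow>
      (\<And>i. i < length S \<Longrightarrow> Ts ! i \<in> C (cDom T (S ! i))) \<Longrightarrow> tcoprod T S Ts \<in> C V"
  using assms unfolding wIndSys_def full_Tsub_def by blast+

lemma wIndSys_Inf:
  assumes ne: "\<CC> \<noteq> {}" and wI: "\<And>C. C \<in> \<CC> \<Longrightarrow> wIndSys T C"
  shows "wIndSys T (Inf \<CC>)"
proof -
  have mem: "S \<in> Inf \<CC> V \<longleftrightarrow> (\<forall>C\<in>\<CC>. S \<in> C V)" for S V
    by (simp add: Inf_fun_def)
  show ?thesis
  proof (rule wIndSysI)
    show "sobj T V S" if "S \<in> Inf \<CC> V" for V S
      using ne that wIndSys_sobj[OF wI] unfolding mem by blast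
    show "S' \<in> Inf \<CC> V" if "S \<in> Inf \<CC> V" "s_iso T V S S'" for V S S'
      using that wIndSys_iso_closed[OF wI] unfolding mem by blast
    show "P \<in> Inf \<CC> (cDom T a)" if "a \<in> cAr T" "S \<in> Inf \<CC> (cCod T a)" "is_res T a S P" for a S P
      using that wIndSys_res_closed[OF wI] unfolding mem by blast
    show "[cId T V] \<in> Inf \<CC> V" if nonempty: "Inf \<CC> V \<noteq> {}" for V
    proof -
      obtain S where "S \<in> Inf \<CC> V"
        using nonempty by blast
      then show ?thesis
        using wIndSys_point[OF wI] unfolding mem by blast
    qed
    show "tcoprod T S Ts \<in> Inf \<CC> V"
      if "S \<in> Inf \<CC> V" "length Ts = length S" "\<forall>i<length S. Ts ! i \<in> Inf \<CC> (cDom T (S ! i))" for V S Ts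
      unfolding mem
    proof
      fix C assume C: "C \<in> \<CC>"
      show "tcoprod T S Ts \<in> C V"
        using that C by (intro wIndSys_tcoprod[OF wI[OF C]]) (auto simp: mem)
    qed
  qed
qed

lemma Cl_upper: "D \<le> Cl T D"
  unfolding Cl_def by (rule Inf_greatest) blast

lemma Cl_least: "wIndSys T C \<Longrightarrow> D \<le> C \<Longrightarrow> Cl T D \<le> C"
  unfolding Cl_def by (rule Inf_lower) blast

lemma unital_wIndSys: "unital T C \<Longrightarrow> wIndSys T C"
  and unital_append_left: "unital T C \<Longrightarrow> S @ S' \<in> C V \<Longrightarrow> S \<in> C V"
  and unital_append_right: "unital T C \<Longrightarrow> S @ S' \<in> C V \<Longrightarrow> S' \<in> C V"
  unfolding unital_def by blast+

lemma unital_nil: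
  assumes "unital T C" and "V \<in> cOb T"
  shows "[] \<in> C V"
proof -
  obtain S where "S \<in> C V"
    using assms unfolding unital_def by blast
  then show ?thesis
    using unital_append_left[OF assms(1), of "[]" S] by simp
qed

lemma unital_point: "unital T C \<Longrightarrow> V \<in> cOb T \<Longrightarrow> [cId T V] \<in> C V"
  using unital_nil unital_wIndSys wIndSys_point by metis

lemma unital_orbit:
  assumes C: "unital T C" and S: "S \<in> C V" and x: "x \<in> set S"
  shows "[x] \<in> C V"
proof -
  obtain S1 S2 where "S = S1 @ [x] @ S2"
    using x by (metis append_Cons append_Nil split_list)
  then show ?thesis
    using S unital_append_left[OF C] unital_append_right[OF C] by metis
qed

context category
begin

lemma wIndSys_sobj_all: "wIndSys T (\<lambda>V. {S. sobj T V S})"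
proof (rule wIndSysI)
  show "[cId T V] \<in> {S. sobj T V S}" if "{S. sobj T V S} \<noteq> {}" for V
    using that id_in_hom unfolding sobj_def hom_def by auto
qed (auto simp: s_iso_def is_res_def intro: sobj_tcoprod)

lemma Cl_wIndSys:
  assumes "\<And>V S. S \<in> D V \<Longrightarrow> sobj T V S"
  shows "wIndSys T (Cl T D)"
  unfolding Cl_def
proof (rule wIndSys_Inf)
  show "{C. wIndSys T C \<and> D \<le> C} \<noteq> {}"
    using wIndSys_sobj_all assms by (auto simp: le_fun_def)
qed blast

text \<open>S and S' are the coproducts over S @ S' of copies of * and of the empty set.\<close>

lemma wIndSys_unitalI:
  assumes C: "wIndSys T C" and nil: "\<And>U. U \<in> cOb T \<Longrightarrow> [] \<in> C U"
    and point: "\<And>U. U \<in> cOb T \<Longrightarrow> [cId T U] \<in> C U"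
  shows "unital T C"
proof -
  let ?pts = "\<lambda>S. map (\<lambda>s. [cId T (cDom T s)]) S" and ?nils = "\<lambda>S. replicate (length S) []"
  have split: "S \<in> C V \<and> S' \<in> C V" if SS': "S @ S' \<in> C V" for V S S'
  proof -
    have so: "sobj T V S" "sobj T V S'"
      using wIndSys_sobj[OF C SS'] unfolding sobj_def by auto
    have doms_Ob: "i < length S \<Longrightarrow> cDom T (S ! i) \<in> cOb T" "i < length S' \<Longrightarrow> cDom T (S' ! i) \<in> cOb T"
      for i using so nth_mem dom_in_Ob unfolding sobj_def by blast+
    have "tcoprod T (S @ S') Ts \<in> C V" if "Ts \<in> {?pts S @ ?nils S', ?nils S @ ?pts S'}" for Ts
      using that
      by (intro wIndSys_tcoprod[OF C SS']) (auto simp: nth_append intro!: nil point doms_Ob)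
    then show ?thesis
      using tcoprod_append tcoprod_ids[OF so(1)] tcoprod_ids[OF so(2)] tcoprod_empty
      by (metis (no_types, lifting) append_Nil append_Nil2 insertCI length_map length_replicate)
  qed
  show ?thesis
    unfolding unital_def using C nil split by blast
qed

end

section \<open>Transfer systems\<close>

lemma
  assumes "transf T R"
  shows transf_subset: "R \<subseteq> cAr T"
    and transf_iso: "is_iso T f \<Longrightarrow> f \<in> R"
    and transf_comp: "f \<in> R \<Longrightarrow> g \<in> R \<Longrightarrow> cCod T f = cDom T g \<Longrightarrow> cComp T g f \<in> R"
  using assms unfolding transf_def by blast+

lemma transf_pullbackD:
  assumes "transf T R"
    and "v \<in> cAr T" "a' \<in> cAr T" "a \<in> R" "u \<in> cAr T"
    and "cDom T v = cDom T a'" "cCod T v = cDom T a" "cCod T a' = cDom T u" "cCod T a = cCod T u"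
    and "cComp T a v = cComp T u a'"
    and "orbit_pullback T a u P p q"
    and "m \<in> fhom T [cDom T v] P" "feq [cDom T v] (fcomp T p m) (\<lambda>_. 0, \<lambda>_. v)"
    and "feq [cDom T v] (fcomp T q m) (\<lambda>_. 0, \<lambda>_. a')" "summand_incl T [cDom T v] P m"
  shows "a' \<in> R"
  using assms unfolding transf_def by blast

text \<open>A summand inclusion of a single orbit is just an isomorphism onto an orbit, so the
pullback axiom of a transfer system can be stated orbitwise.\<close>

lemma transfI:
  assumes "R \<subseteq> cAr T" and "\<And>f. is_iso T f \<Longrightarrow> f \<in> R"
    and "\<And>f g. f \<in> R \<Longrightarrow> g \<in> R \<Longrightarrow> cCod T f = cDom T g \<Longrightarrow> cComp T g f \<in> R"
    and pullback: "\<And>a u P p q j e. a \<in> R \<Longrightarrow> u \<in> cAr T \<Longrightarrow> cCod T u = cCod T a \<Longrightarrow>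
      orbit_pullback T a u P p q \<Longrightarrow> j < length P \<Longrightarrow> is_iso T e \<Longrightarrow> cCod T e = P ! j \<Longrightarrow>
      cComp T (snd q j) e \<in> R"
  shows "transf T R"
  unfolding transf_def
proof (intro conjI allI impI)
  fix v a' a u P p q m
  assume sq: "v \<in> cAr T \<and> a' \<in> cAr T \<and> a \<in> R \<and> u \<in> cAr T \<and>
      cDom T v = cDom T a' \<and> cCod T v = cDom T a \<and> cCod T a' = cDom T u \<and> cCod T a = cCod T u \<and>
      cComp T a v = cComp T u a'"
    and "orbit_pullback T a u P p q \<and> m \<in> fhom T [cDom T v] P \<and> feq [cDom T v] (fcomp T p m) (\<lambda>_. 0, \<lambda>_. v) \<and>
      feq [cDom T v] (fcomp T q m) (\<lambda>_. 0, \<lambda>_. a') \<and> summand_incl T [cDom T v] P m"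
  then have pb: "orbit_pullback T a u P p q"
    and m: "fst m 0 < length P" "is_iso T (snd m 0)" "cCod T (snd m 0) = P ! fst m 0"
    and a': "cComp T (snd q (fst m 0)) (snd m 0) = a'"
    by (auto simp: summand_incl_def fhom_single feq_single fcomp_def hom_def)
  show "a' \<in> R"
    using pullback[OF _ _ _ pb m] sq a' by simp
qed (use assms in auto)

lemma (in category) transf_pullback_orbit:
  assumes R: "transf T R" and a: "a \<in> R" and u: "u \<in> cAr T" "cCod T u = cCod T a"
    and pb: "orbit_pullback T a u P p q" and j: "j < length P" and e: "is_iso T e" "cCod T e = P ! j"
  shows "cComp T (snd q j) e \<in> R"
proof -
  note sq = orbit_pullback_at[OF pb j]
  have eh: "e \<in> hom T (cDom T e) (P ! j)"
    using e unfolding is_iso_def hom_def by simp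
  have ah: "a \<in> hom T (cDom T a) (cCod T a)" and uh: "u \<in> hom T (cDom T u) (cCod T a)"
    using transf_subset[OF R] a u unfolding hom_def by auto
  let ?v = "cComp T (snd p j) e" and ?a' = "cComp T (snd q j) e"
  have v: "?v \<in> hom T (cDom T e) (cDom T a)" and a': "?a' \<in> hom T (cDom T e) (cDom T u)"
    using sq(3,4) cComp_in_hom[OF eh] by auto
  have comm: "cComp T a ?v = cComp T u ?a'"
    using sq(5) cComp_assoc[OF eh sq(3) ah] cComp_assoc[OF eh sq(4) uh] by simp
  show ?thesis
  proof (rule transf_pullbackD[OF R _ _ a _ _ _ _ u(2)[symmetric] _ pb])
    show "(\<lambda>_. j, \<lambda>_. e) \<in> fhom T [cDom T ?v] P"
      using j eh v unfolding fhom_single hom_def by simp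
    show "summand_incl T [cDom T ?v] P (\<lambda>_. j, \<lambda>_. e)"
      using j eh v e(1) unfolding summand_incl_def fhom_single hom_def by (simp add: lessThan_Suc)
  qed (use v a' u comm sq(1,2) in \<open>auto simp: hom_def feq_single fcomp_def\<close>)
qed

context category
begin

lemma is_res_of_fpullback:
  assumes a: "a \<in> cAr T" and u: "u \<in> cAr T" "cCod T u = cCod T a" and pb: "orbit_pullback T a u P p q"
  shows "is_res T u [a] (map (snd q) [0..<length P])"
proof -
  let ?P' = "map (snd q) [0..<length P]"
  note q = orbit_pullback_at(2,4)[OF pb]
  have doms_P': "doms T ?P' = P"
    using q(2) by (intro nth_equalityI) (simp_all add: doms_def hom_def)
  have "is_fpullback T [cDom T a] [cDom T u] [cCod T a] (\<lambda>_. 0, \<lambda>i. [a] ! i) (\<lambda>_. 0, \<lambda>_. u)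
      P p (\<lambda>_. 0, \<lambda>i. ?P' ! i)"
    using q(1) by (intro fpullback_feq[OF pb]) (simp_all add: feq_def)
  then have "\<exists>p. is_fpullback T (doms T [a]) [cDom T u] [cCod T u] (\<lambda>_. 0, \<lambda>i. [a] ! i) (\<lambda>_. 0, \<lambda>_. u)
      (doms T ?P') p (\<lambda>_. 0, \<lambda>i. ?P' ! i)"
    unfolding doms_P' u(2) by (intro exI[of _ p]) (simp add: doms_def)
  moreover have "sobj T (cDom T u) ?P'"
    using q(2) dom_in_Ob[OF u(1)] unfolding sobj_def hom_def by auto
  ultimately show ?thesis
    using a u cod_in_Ob unfolding is_res_def sobj_def by auto
qed

lemma frakR_transf:
  assumes C: "unital T C"
  shows "transf T (frakR T C)"
proof (rule transfI)
  note wC = unital_wIndSys[OF C]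
  show "frakR T C \<subseteq> cAr T"
    unfolding frakR_def by blast
  show "f \<in> frakR T C" if f: "is_iso T f" for f
  proof -
    have fh: "f \<in> hom T (cDom T f) (cCod T f)"
      using f unfolding is_iso_def hom_def by simp
    then have "cCod T f \<in> cOb T"
      using cod_in_Ob unfolding hom_def by blast
    then have "s_iso T (cCod T f) [cId T (cCod T f)] [f]"
      using s_iso_precomp_iso[of "cId T (cCod T f)" "cCod T f" f] id_in_hom f cComp_id_left[OF fh]
      unfolding hom_def by simp
    then show ?thesis
      using wIndSys_iso_closed[OF wC] unital_point[OF C \<open>cCod T f \<in> cOb T\<close>] fh
      unfolding frakR_def hom_def by blast
  qed
  show "cComp T g f \<in> frakR T C" if "f \<in> frakR T C" "g \<in> frakR T C" "cCod T f = cDom T g" for f g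
  proof -
    have "tcoprod T [g] [[f]] \<in> C (cCod T g)"
      using that by (intro wIndSys_tcoprod[OF wC]) (auto simp: frakR_def)
    then show ?thesis
      using that cComp_in_hom[of f _ _ g] unfolding frakR_def hom_def tcoprod_single by auto
  qed
  show "cComp T (snd q j) e \<in> frakR T C"
    if a: "a \<in> frakR T C" and u: "u \<in> cAr T" "cCod T u = cCod T a"
      and pb: "orbit_pullback T a u P p q"
      and j: "j < length P" and e: "is_iso T e" "cCod T e = P ! j"
    for a u P p q j e
  proof -
    have "map (snd q) [0..<length P] \<in> C (cDom T u)"
      using a u is_res_of_fpullback[OF _ u pb] wIndSys_res_closed[OF wC u(1)] unfolding frakR_def by auto
    then have "[snd q j] \<in> C (cDom T u)"
      using unital_orbit[OF C] j by fastforce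
    moreover have qj: "snd q j \<in> hom T (P ! j) (cDom T u)"
      using orbit_pullback_at(4)[OF pb j] .
    ultimately have "[cComp T (snd q j) e] \<in> C (cDom T u)"
      using s_iso_precomp_iso[of "snd q j" "cDom T u" e] e wIndSys_iso_closed[OF wC]
      unfolding hom_def by (metis (mono_tags, lifting) mem_Collect_eq)
    moreover have "cComp T (snd q j) e \<in> hom T (cDom T e) (cDom T u)"
      using cComp_in_hom[OF _ qj] e unfolding is_iso_def hom_def by simp
    ultimately show ?thesis
      unfolding frakR_def hom_def by simp
  qed
qed

end

lemma frakR_mono: "C \<le> C' \<Longrightarrow> frakR T C \<subseteq> frakR T C'"
  unfolding frakR_def by (auto simp: le_fun_def)

section \<open>The right adjoint\<close>

definition IndSys_of :: "('o, 'm) cat \<Rightarrow> 'm set \<Rightarrow> ('o, 'm) tsub" where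
  "IndSys_of T R V = {S. sobj T V S \<and> set S \<subseteq> R}"

lemma frakR_subset_iff_le_IndSys_of:
  assumes C: "unital T C"
  shows "frakR T C \<subseteq> R \<longleftrightarrow> C \<le> IndSys_of T R"
proof
  assume le: "frakR T C \<subseteq> R"
  show "C \<le> IndSys_of T R"
  proof (intro le_funI subsetI)
    fix V S assume S: "S \<in> C V"
    have "sobj T V S"
      using wIndSys_sobj[OF unital_wIndSys[OF C] S] .
    moreover have "x \<in> frakR T C" if "x \<in> set S" for x
      using unital_orbit[OF C S that] that \<open>sobj T V S\<close> unfolding frakR_def sobj_def by auto
    ultimately show "S \<in> IndSys_of T R V"
      using le unfolding IndSys_of_def by blast
  qed
next
  assume "C \<le> IndSys_of T R"
  then show "frakR T C \<subseteq> R"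
    unfolding frakR_def IndSys_of_def le_fun_def by fastforce
qed

lemma IndSys_eq_IndSys_of_frakR:
  assumes C: "IndSys T C"
  shows "C = IndSys_of T (frakR T C)"
proof (rule antisym)
  show "C \<le> IndSys_of T (frakR T C)"
    using frakR_subset_iff_le_IndSys_of C unfolding IndSys_def by blast
  show "IndSys_of T (frakR T C) \<le> C"
  proof (intro le_funI subsetI)
    fix V S assume "S \<in> IndSys_of T (frakR T C) V"
    then have "sobj T V S" "set S \<subseteq> frakR T C"
      unfolding IndSys_of_def by auto
    then show "S \<in> C V"
    proof (induction S)
      case Nil
      then show ?case
        using C unfolding IndSys_def sobj_def by simp
    next
      case (Cons x S)
      then have "[x] \<in> C V" "S \<in> C V"
        unfolding frakR_def sobj_def by auto
      then show ?case
        using C unfolding IndSys_def by (metis append_Cons append_Nil)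
    qed
  qed
qed

context category
begin

lemma frakR_IndSys_of: "R \<subseteq> cAr T \<Longrightarrow> frakR T (IndSys_of T R) = R"
  unfolding frakR_def IndSys_of_def sobj_def using cod_in_Ob by auto

lemma IndSys_of_iso_closed:
  assumes R: "transf T R" and S: "S \<in> IndSys_of T R V" and iso: "s_iso T V S S'"
  shows "S' \<in> IndSys_of T R V"
proof -
  have "S' ! j \<in> R" if j: "j < length S'" for j
  proof -
    obtain i e where "i < length S" "is_iso T e" "e \<in> hom T (cDom T (S' ! j)) (cDom T (S ! i))"
      "S' ! j = cComp T (S ! i) e"
      using s_iso_orbit[OF iso j] .
    moreover have "S ! i \<in> R"
      using S \<open>i < length S\<close> unfolding IndSys_of_def by auto
    ultimately show ?thesis
      using transf_iso[OF R] transf_comp[OF R] unfolding hom_def by auto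
  qed
  then show ?thesis
    using iso unfolding IndSys_of_def s_iso_def by (auto simp: in_set_conv_nth)
qed

lemma res_orbit_lift:
  assumes orb: "orbital T" and a: "a \<in> cAr T" and S: "sobj T (cCod T a) S"
    and pb: "res_pullback T a S P q0" and k: "k < length P"
  obtains P2 p2 q2 j e where "orbit_pullback T (S ! fst q0 k) a P2 p2 q2"
    "j < length P2" "e \<in> hom T (cDom T (P ! k)) (P2 ! j)"
    "cComp T (snd p2 j) e = snd q0 k" "cComp T (snd q2 j) e = P ! k"
proof -
  define i where "i = fst q0 k"
  note sq = res_pullback_at[OF pb k, folded i_def]
  have Si: "S ! i \<in> hom T (cDom T (S ! i)) (cCod T a)"
    using sq(1) S nth_mem unfolding sobj_def hom_def by auto
  have "\<exists>P2 p2 q2. orbit_pullback T (S ! i) a P2 p2 q2"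
    using orb Si a dom_in_Ob cod_in_Ob unfolding orbital_def by (simp add: Fobj_def fhom_def hom_def)
  then obtain P2 p2 q2 where pb2: "orbit_pullback T (S ! i) a P2 p2 q2"
    by blast
  have X: "cDom T (P ! k) \<in> cOb T"
    using sq(3) dom_in_Ob unfolding hom_def by force
  obtain j e where "j < length P2" "e \<in> hom T (cDom T (P ! k)) (P2 ! j)"
    "fst p2 j = 0" "cComp T (snd p2 j) e = snd q0 k" "fst q2 j = 0" "cComp T (snd q2 j) e = P ! k"
    by (rule fpullback_lift_point[OF pb2 X, of 0 "snd q0 k" 0 "P ! k"]) (use sq in simp_all)
  then show thesis
    using that pb2 unfolding i_def by blast
qed

text \<open>An inverse of e is obtained by lifting back through the pullback defining the restriction
of S; both composites are identities by the uniqueness of factorisations through pullbacks.\<close>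

lemma res_orbit_comparison_iso:
  assumes a: "a \<in> cAr T" and S: "sobj T (cCod T a) S"
    and pb: "res_pullback T a S P q0" and k: "k < length P"
    and pb2: "orbit_pullback T (S ! fst q0 k) a P2 p2 q2"
    and j: "j < length P2" and e: "e \<in> hom T (cDom T (P ! k)) (P2 ! j)"
    and ep: "cComp T (snd p2 j) e = snd q0 k" and eq: "cComp T (snd q2 j) e = P ! k"
  shows "is_iso T e"
proof -
  define i where "i = fst q0 k"
  note sq = res_pullback_at[OF pb k, folded i_def]
  note sq2 = orbit_pullback_at[OF pb2[folded i_def] j]
  have Si: "S ! i \<in> cAr T" "cCod T (S ! i) = cCod T a"
    using sq(1) S nth_mem unfolding sobj_def by auto
  have X: "cDom T (P ! k) \<in> cOb T"
    using sq(3) dom_in_Ob unfolding hom_def by force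
  have X2: "P2 ! j \<in> cOb T"
    using fpullbackD[OF pb2] j unfolding Fobj_def by auto
  obtain k' e' where k': "k' < length P" "e' \<in> hom T (P2 ! j) (cDom T (P ! k'))"
    and e'p: "fst q0 k' = i" "cComp T (snd q0 k') e' = snd p2 j"
    and e'q: "cComp T (P ! k') e' = snd q2 j"
    by (rule res_pullback_lift[OF pb X2 sq(1) sq2(3,4,5)])
  note sq' = res_pullback_at[OF pb k'(1), unfolded e'p]
  have "k = k' \<and> cId T (cDom T (P ! k)) = cComp T e' e" (is "_ \<and> ?left_inverse")
  proof (rule res_pullback_point_eq[OF pb a S X k id_in_hom[OF X] k'(1) cComp_in_hom[OF e k'(2)]])
    show "cComp T (snd q0 k) (cId T (cDom T (P ! k))) = cComp T (snd q0 k') (cComp T e' e)"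
      using cComp_assoc[OF e k'(2) sq'(2)] cComp_id_right[OF sq(2)] e'p ep by simp
    show "cComp T (P ! k) (cId T (cDom T (P ! k))) = cComp T (P ! k') (cComp T e' e)"
      using cComp_assoc[OF e k'(2) sq'(3)] cComp_id_right[OF sq(3)] e'q eq by simp
  qed (use e'p i_def in simp)
  then have kk': "k' = k" and left: ?left_inverse
    by blast+
  have e'h: "e' \<in> hom T (P2 ! j) (cDom T (P ! k))"
    using k'(2) kk' by simp
  have "j = j \<and> cId T (P2 ! j) = cComp T e e'"
  proof (rule orbit_pullback_point_eq[OF pb2[folded i_def] Si(1) a Si(2)[symmetric] X2 j id_in_hom[OF X2] j
        cComp_in_hom[OF e'h e]])
    show "cComp T (snd p2 j) (cId T (P2 ! j)) = cComp T (snd p2 j) (cComp T e e')"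
      using cComp_assoc[OF e'h e sq2(3)] cComp_id_right[OF sq2(3)] ep e'p kk' by simp
    show "cComp T (snd q2 j) (cId T (P2 ! j)) = cComp T (snd q2 j) (cComp T e e')"
      using cComp_assoc[OF e'h e sq2(4)] cComp_id_right[OF sq2(4)] eq e'q kk' by simp
  qed
  then show ?thesis
    using e e'h left unfolding is_iso_def hom_def by auto
qed

lemma IndSys_of_res_closed:
  assumes orb: "orbital T" and R: "transf T R"
    and res: "is_res T a S P" and S: "S \<in> IndSys_of T R (cCod T a)"
  shows "P \<in> IndSys_of T R (cDom T a)"
proof -
  obtain q0 where pb: "res_pullback T a S P q0" and a: "a \<in> cAr T" and P: "sobj T (cDom T a) P"
    using res unfolding is_res_def by blast
  have SR: "sobj T (cCod T a) S" "set S \<subseteq> R"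
    using S unfolding IndSys_of_def by auto
  have "P ! k \<in> R" if k: "k < length P" for k
  proof -
    obtain P2 p2 q2 j e where pb2: "orbit_pullback T (S ! fst q0 k) a P2 p2 q2"
      and j: "j < length P2" and e: "e \<in> hom T (cDom T (P ! k)) (P2 ! j)"
      and ep: "cComp T (snd p2 j) e = snd q0 k" and eq: "cComp T (snd q2 j) e = P ! k"
      by (rule res_orbit_lift[OF orb a SR(1) pb k])
    have "is_iso T e"
      by (rule res_orbit_comparison_iso[OF a SR(1) pb k pb2 j e ep eq])
    moreover have "S ! fst q0 k \<in> R" "cCod T a = cCod T (S ! fst q0 k)"
      using res_pullback_at(1)[OF pb k] SR nth_mem unfolding sobj_def by auto
    ultimately have "cComp T (snd q2 j) e \<in> R"
      using transf_pullback_orbit[OF R _ a _ pb2 j] e unfolding hom_def by auto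
    then show ?thesis
      using eq by simp
  qed
  then show ?thesis
    using P unfolding IndSys_of_def by (auto simp: in_set_conv_nth)
qed

lemma IndSys_IndSys_of:
  assumes orb: "orbital T" and R: "transf T R"
  shows "IndSys T (IndSys_of T R)"
proof -
  have "wIndSys T (IndSys_of T R)"
  proof (rule wIndSysI)
    show "[cId T V] \<in> IndSys_of T R V" if "IndSys_of T R V \<noteq> {}" for V
    proof -
      have "V \<in> cOb T"
        using that unfolding IndSys_of_def sobj_def by auto
      then show ?thesis
        using id_in_hom transf_iso[OF R id_is_iso] unfolding IndSys_of_def sobj_def hom_def by auto
    qed
    show "tcoprod T S Ts \<in> IndSys_of T R V"
      if S: "S \<in> IndSys_of T R V" and "length Ts = length S"
        and Ts: "\<forall>i<length S. Ts ! i \<in> IndSys_of T R (cDom T (S ! i))"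
      for V S Ts
    proof -
      have "sobj T V (tcoprod T S Ts)"
        using S Ts sobj_tcoprod unfolding IndSys_of_def by auto
      moreover have "x \<in> R" if "x \<in> set (tcoprod T S Ts)" for x
      proof -
        obtain i t where i: "i < length S" and t: "t \<in> set (Ts ! i)" and x: "x = cComp T (S ! i) t"
          using \<open>x \<in> set (tcoprod T S Ts)\<close> unfolding tcoprod_set by blast
        have "S ! i \<in> R" "t \<in> R" "cCod T t = cDom T (S ! i)"
          using S Ts i t nth_mem unfolding IndSys_of_def sobj_def by auto
        then show ?thesis
          using transf_comp[OF R] x by blast
      qed
      ultimately show ?thesis
        unfolding IndSys_of_def by auto
    qed
    show "S' \<in> IndSys_of T R V" if "S \<in> IndSys_of T R V" "s_iso T V S S'" for V S S'
      using IndSys_of_iso_closed[OF R] that .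
    show "P \<in> IndSys_of T R (cDom T a)" if "a \<in> cAr T" "S \<in> IndSys_of T R (cCod T a)" "is_res T a S P"
      for a S P
      using IndSys_of_res_closed[OF orb R that(3,2)] .
  qed (simp add: IndSys_of_def)
  moreover have "[] \<in> IndSys_of T R V" if "V \<in> cOb T" for V
    using that unfolding IndSys_of_def sobj_def by simp
  moreover have "S @ S' \<in> IndSys_of T R V \<longleftrightarrow> S \<in> IndSys_of T R V \<and> S' \<in> IndSys_of T R V"
    for V S S'
    unfolding IndSys_of_def sobj_def by auto
  ultimately show ?thesis
    unfolding IndSys_def unital_def by blast
qed

end

section \<open>The left adjoint\<close>

definition restrictions :: "('o, 'm) cat \<Rightarrow> 'm set \<Rightarrow> ('o, 'm) tsub" where
  "restrictions T R =
    (\<lambda>V. {P. \<exists>f g. f \<in> R \<and> g \<in> cAr T \<and> cCod T g = cCod T f \<and> cDom T g = V \<and> is_res T g [f] P})"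

lemma Fbar_eq: "Fbar T R = Cl T (sup (F0 T) (Cl T (restrictions T R)))"
  unfolding Fbar_def wjoin_def restrictions_def ..

lemma F0_le_Fbar: "F0 T \<le> Fbar T R"
  unfolding Fbar_eq using Cl_upper by (rule le_supE)

lemma restrictions_le_Fbar: "restrictions T R \<le> Fbar T R"
  unfolding Fbar_eq using Cl_upper order_trans sup_ge2 by metis

lemma Fbar_least: "wIndSys T C \<Longrightarrow> F0 T \<le> C \<Longrightarrow> restrictions T R \<le> C \<Longrightarrow> Fbar T R \<le> C"
  unfolding Fbar_eq by (intro Cl_least) (simp_all add: Cl_least)

lemma F0_le_unital:
  assumes C: "unital T C"
  shows "F0 T \<le> C"
proof (intro le_funI subsetI)
  fix V S assume "S \<in> F0 T V"
  then have S: "s_iso T V [] S \<or> s_iso T V [cId T V] S"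
    unfolding F0_def by simp
  then have "V \<in> cOb T"
    unfolding s_iso_def sobj_def by auto
  then show "S \<in> C V"
    using S unital_nil[OF C] unital_point[OF C] wIndSys_iso_closed[OF unital_wIndSys[OF C]] by blast
qed

context category
begin

lemma Fbar_wIndSys: "wIndSys T (Fbar T R)"
proof -
  have "wIndSys T (Cl T (restrictions T R))"
    by (rule Cl_wIndSys) (auto simp: restrictions_def is_res_def)
  then show ?thesis
    unfolding Fbar_eq
    by (intro Cl_wIndSys) (auto simp: F0_def s_iso_def dest: wIndSys_sobj)
qed

lemma Fbar_unital: "unital T (Fbar T R)"
proof (rule wIndSys_unitalI[OF Fbar_wIndSys])
  fix U assume "U \<in> cOb T"
  then have "sobj T U []" "sobj T U [cId T U]"
    using id_in_hom unfolding sobj_def hom_def by auto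
  then have "[] \<in> F0 T U" "[cId T U] \<in> F0 T U"
    unfolding F0_def using s_iso_refl by auto
  then show "[] \<in> Fbar T R U" "[cId T U] \<in> Fbar T R U"
    using le_funD[OF F0_le_Fbar[of T R], of U] by blast+
qed

lemma is_res_along_id:
  assumes S: "sobj T V S"
  shows "is_res T (cId T V) S S"
proof -
  have V: "V \<in> cOb T" and Sh: "\<And>i. i < length S \<Longrightarrow> S ! i \<in> hom T (cDom T (S ! i)) V"
    using S unfolding sobj_def hom_def by auto
  have idV: "cId T V \<in> cAr T" "cDom T (cId T V) = V" "cCod T (cId T V) = V"
    using id_in_hom[OF V] unfolding hom_def by auto
  have pb: "is_fpullback T (doms T S) [V] [V] (\<lambda>i. 0, \<lambda>i. S ! i) (\<lambda>i. 0, \<lambda>i. cId T V)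
      (doms T S) (fid T (doms T S)) (\<lambda>i. 0, \<lambda>i. S ! i)"
    unfolding is_fpullback_def
  proof (intro conjI allI impI)
    show "Fobj T (doms T S)"
      using Sh dom_in_Ob unfolding Fobj_def hom_def by (auto simp: in_set_conv_nth)
    show "fid T (doms T S) \<in> fhom T (doms T S) (doms T S)"
      using Sh dom_in_Ob id_in_hom unfolding fid_def fhom_def hom_def by auto
    show "(\<lambda>i. 0, \<lambda>i. S ! i) \<in> fhom T (doms T S) [V]"
      using sobj_fhom[OF S] .
    show "feq (doms T S) (fcomp T (\<lambda>i. 0, \<lambda>i. S ! i) (fid T (doms T S)))
        (fcomp T (\<lambda>i. 0, \<lambda>i. cId T V) (\<lambda>i. 0, \<lambda>i. S ! i))"
      by (simp add: feq_def fcomp_def fid_def cComp_id_left[OF Sh] cComp_id_right[OF Sh])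
  next
    fix Q p' q'
    assume "Fobj T Q \<and> p' \<in> fhom T Q (doms T S) \<and> q' \<in> fhom T Q [V] \<and>
      feq Q (fcomp T (\<lambda>i. 0, \<lambda>i. S ! i) p') (fcomp T (\<lambda>i. 0, \<lambda>i. cId T V) q')"
    then have p': "p' \<in> fhom T Q (doms T S)" and q': "q' \<in> fhom T Q [V]"
      and comm: "feq Q (fcomp T (\<lambda>i. 0, \<lambda>i. S ! i) p') (fcomp T (\<lambda>i. 0, \<lambda>i. cId T V) q')"
      by blast+
    have fid_comp: "feq Q (fcomp T (fid T (doms T S)) h) h" if "h \<in> fhom T Q (doms T S)" for h
      using that cComp_id_left unfolding feq_def fcomp_def fid_def fhom_def by auto
    have "feq Q (fcomp T (\<lambda>i. 0, \<lambda>i. S ! i) p') q'"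
      using comm q' cComp_id_left unfolding feq_def fcomp_def fhom_def by auto
    moreover have "feq Q p' h'" if "h' \<in> fhom T Q (doms T S)" "feq Q (fcomp T (fid T (doms T S)) h') p'" for h'
      using fid_comp[OF that(1)] that(2) unfolding feq_def by auto
    ultimately show "\<exists>h\<in>fhom T Q (doms T S). feq Q (fcomp T (fid T (doms T S)) h) p' \<and>
        feq Q (fcomp T (\<lambda>i. 0, \<lambda>i. S ! i) h) q' \<and>
        (\<forall>h'\<in>fhom T Q (doms T S). feq Q (fcomp T (fid T (doms T S)) h') p' \<and>
          feq Q (fcomp T (\<lambda>i. 0, \<lambda>i. S ! i) h') q' \<longrightarrow> feq Q h h')"
      using p' fid_comp[OF p'] by blast
  qed
  show ?thesis
    unfolding is_res_def idV(2,3) by (intro conjI exI) (rule idV(1) S pb)+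
qed

lemma subset_frakR_Fbar:
  assumes "R \<subseteq> cAr T"
  shows "R \<subseteq> frakR T (Fbar T R)"
proof
  fix f assume f: "f \<in> R"
  then have "f \<in> cAr T" "cCod T f \<in> cOb T"
    using assms cod_in_Ob by auto
  then have "is_res T (cId T (cCod T f)) [f] [f]" "cId T (cCod T f) \<in> hom T (cCod T f) (cCod T f)"
    using is_res_along_id id_in_hom unfolding sobj_def by auto
  then have "[f] \<in> restrictions T R (cCod T f)"
    using f unfolding restrictions_def hom_def by blast
  then have "[f] \<in> Fbar T R (cCod T f)"
    using le_funD[OF restrictions_le_Fbar[of T R]] by blast
  then show "f \<in> frakR T (Fbar T R)"
    using \<open>f \<in> cAr T\<close> unfolding frakR_def by blast
qed

lemma Fbar_le_iff:
  assumes C: "unital T C" and R: "R \<subseteq> cAr T"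
  shows "Fbar T R \<le> C \<longleftrightarrow> R \<subseteq> frakR T C"
proof
  assume "Fbar T R \<le> C"
  then show "R \<subseteq> frakR T C"
    using subset_frakR_Fbar[OF R] frakR_mono by blast
next
  assume sub: "R \<subseteq> frakR T C"
  note wC = unital_wIndSys[OF C]
  have "restrictions T R \<le> C"
  proof (intro le_funI subsetI)
    fix V P assume "P \<in> restrictions T R V"
    then obtain f g where "f \<in> R" "g \<in> cAr T" "cCod T g = cCod T f" "cDom T g = V" "is_res T g [f] P"
      unfolding restrictions_def by blast
    then show "P \<in> C V"
      using sub wIndSys_res_closed[OF wC] unfolding frakR_def by force
  qed
  then show "Fbar T R \<le> C"
    using Fbar_least[OF wC F0_le_unital[OF C]] by blast
qed

lemma frakR_Fbar:
  assumes orb: "orbital T" and R: "transf T R"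
  shows "frakR T (Fbar T R) = R"
proof
  have "Fbar T R \<le> IndSys_of T R"
    using Fbar_le_iff IndSys_IndSys_of[OF orb R] frakR_IndSys_of transf_subset[OF R]
    unfolding IndSys_def by blast
  then show "frakR T (Fbar T R) \<subseteq> R"
    using frakR_mono frakR_IndSys_of transf_subset[OF R] by metis
  show "R \<subseteq> frakR T (Fbar T R)"
    using subset_frakR_Fbar transf_subset[OF R] .
qed

end

theorem mainTheorem15:
  fixes T :: "('o, 'm) cat"
  assumes "orbital T"
  shows "(\<forall>C. unital T C \<longrightarrow> transf T (frakR T C)) \<and>
    (\<forall>R. transf T R \<longrightarrow> (\<exists>!C. IndSys T C \<and> frakR T C = R)) \<and>
    (let \<rho> = (\<lambda>R. THE C. IndSys T C \<and> frakR T C = R) in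
       (\<forall>R. transf T R \<longrightarrow> unital T (\<rho> R)) \<and>
       (\<forall>C R. unital T C \<and> transf T R \<longrightarrow> (frakR T C \<subseteq> R \<longleftrightarrow> C \<le> \<rho> R)) \<and>
       (\<forall>R R'. transf T R \<and> transf T R' \<and> \<rho> R \<le> \<rho> R' \<longrightarrow> R \<subseteq> R')) \<and>
    (\<forall>R. transf T R \<longrightarrow> unital T (Fbar T R)) \<and>
    (\<forall>C R. unital T C \<and> transf T R \<longrightarrow> (Fbar T R \<le> C \<longleftrightarrow> R \<subseteq> frakR T C)) \<and>
    (\<forall>R R'. transf T R \<and> transf T R' \<and> Fbar T R \<le> Fbar T R' \<longrightarrow> R \<subseteq> R')"
proof -
  interpret category T
    using assms by (rule orbital_category)
  have IndSys_of_unique: "IndSys T C \<and> frakR T C = R \<longleftrightarrow> C = IndSys_of T R" if R: "transf T R" for C R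
    using IndSys_eq_IndSys_of_frakR IndSys_IndSys_of[OF assms R] frakR_IndSys_of[OF transf_subset[OF R]]
    by blast
  then have the_IndSys_of: "(THE C. IndSys T C \<and> frakR T C = R) = IndSys_of T R" if "transf T R" for R
    using that by simp
  have unital_IndSys_of: "unital T (IndSys_of T R)" if "transf T R" for R
    using IndSys_IndSys_of[OF assms that] unfolding IndSys_def by blast
  have IndSys_of_reflects: "R \<subseteq> R'" if "transf T R" "transf T R'" "IndSys_of T R \<le> IndSys_of T R'" for R R'
    using frakR_mono[OF that(3)] frakR_IndSys_of transf_subset that(1,2) by metis
  have Fbar_reflects: "R \<subseteq> R'" if "transf T R" "transf T R'" "Fbar T R \<le> Fbar T R'" for R R'
    using frakR_mono[OF that(3)] frakR_Fbar[OF assms] that(1,2) by metis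
  show ?thesis
    unfolding Let_def
    by (intro conjI allI impI)
      (auto simp: IndSys_of_unique the_IndSys_of unital_IndSys_of frakR_subset_iff_le_IndSys_of
        Fbar_le_iff transf_subset frakR_transf Fbar_unital
        intro: IndSys_of_reflects[THEN subsetD] Fbar_reflects[THEN subsetD])
qed

end
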